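(* Let $N_t$ be a simple point process on $[0,\infty)$ with $N_0=0$, arrival times $0<\tau_1<\tau_2<\cdots$ and inter-arrival times $T_i=\tau_i-\tau_{i-1}$ ($\tau_0=0$). Let $p>0$ and let i.i.d. claims $C_i$ be given, and suppose Assumption A1 holds. Then for any fixed $\epsilon,\epsilon'>0$ there exists a constant $M>0$ such that $$\mathbb{P}\left(\bigcap_{n=1}^{\infty}\left\{p\sum_{i=1}^{n}T_i\le n\left(\frac{p}{\mu}+\epsilon\right)+M\right\}\right)>1-\epsilon'.$$
   Context: Assumption A1: (i) $(N_t/t\in\cdot)$ satisfies a large deviation principle (as $t\to\infty$) with a rate function $I$ such that $I(x)=0$ if and only if $x=\mu$ (for some $\mu>0$); (ii) $I$ is increasing on $[\mu,\infty)$ and decreasing on $[0,\mu]$; (iii) the net profit condition $\rho:=\mu\mathbb{E}[C_1]/p<1$ holds; (iv) there exists $\theta>0$ such that $\mathbb{E}[e^{\theta\sum_{i=1}^n T_i}]<\infty$ for every $n\in\mathbb{N}$. Here $C_i$ are i.i.d. nonnegative claim sizes with finite mean, independent of $N$, and $p>0$ is the premium rate. *)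

theory Defs
  imports "HOL-Probability.Probability"
begin

definition arrival :: "(nat \<Rightarrow> 'a \<Rightarrow> real) \<Rightarrow> nat \<Rightarrow> 'a \<Rightarrow> real" where
  "arrival T n \<omega> = (\<Sum>i=1..n. T i \<omega>)"

definition count_proc :: "(nat \<Rightarrow> 'a \<Rightarrow> real) \<Rightarrow> real \<Rightarrow> 'a \<Rightarrow> nat" where
  "count_proc T t \<omega> = card {n. 1 \<le> n \<and> arrival T n \<omega> \<le> t}"

definition elog :: "real \<Rightarrow> ereal" where
  "elog x = (if x \<le> 0 then - \<infinity> else ereal (ln x))"

definition rate_function :: "(real \<Rightarrow> ereal) \<Rightarrow> bool" where
  "rate_function I \<longleftrightarrow> (\<forall>x. 0 \<le> I x) \<and> (\<forall>c. closed {x. I x \<le> ereal c})"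

definition LDP :: "(real \<Rightarrow> real measure) \<Rightarrow> (real \<Rightarrow> ereal) \<Rightarrow> bool" where
  "LDP P I \<longleftrightarrow> rate_function I \<and>
     (\<forall>F. closed F \<longrightarrow>
        Limsup at_top (\<lambda>t. ereal (1/t) * elog (measure (P t) F)) \<le> - (INF x\<in>F. I x)) \<and>
     (\<forall>G. open G \<longrightarrow>
        - (INF x\<in>G. I x) \<le> Liminf at_top (\<lambda>t. ereal (1/t) * elog (measure (P t) G)))"

end

theory Submission imports Defs begin

text \<open>Put a = 1/\<mu> + \<epsilon>/p, so that 1/a < \<mu>. If the n-th arrival comes after time n a,
  at most n points have arrived by then, so N_t/t \<le> 1/a at t = n a. As I decreases on
  [0,\<mu>] and vanishes only at \<mu>, it is bounded away from 0 on [0,1/a], so the LDP upper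
  bound makes these events exponentially rare in n, hence summable, and a tail of their
  union has small probability. The finitely many earlier arrival times are bounded by a
  large M, by continuity of the measure. Only the arrival process and the LDP upper bound
  enter.\<close>

lemma card_le_threshold_eq:
  fixes f :: "nat \<Rightarrow> real"
  assumes "strict_mono f" "f k \<le> t" "t < f (Suc k)"
  shows "card {n. 1 \<le> n \<and> f n \<le> t} = k"
proof -
  have "{n. 1 \<le> n \<and> f n \<le> t} = {1..k}"
  proof safe
    fix n assume "1 \<le> n" "f n \<le> t"
    with assms(3) have "f n < f (Suc k)" by linarith
    with \<open>1 \<le> n\<close> show "n \<in> {1..k}" by (simp add: strict_mono_less[OF assms(1)])
  next
    fix n assume "n \<in> {1..k}"
    then have "f n \<le> f k" by (simp add: strict_mono_less_eq[OF assms(1)])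
    with assms(2) show "f n \<le> t" by linarith
  qed auto
  then show ?thesis by simp
qed

lemma card_le_threshold_le:
  fixes f :: "nat \<Rightarrow> real"
  assumes "strict_mono f" "t < f n"
  shows "card {k. 1 \<le> k \<and> f k \<le> t} \<le> n"
proof -
  have "{k. 1 \<le> k \<and> f k \<le> t} \<subseteq> {1..n}"
  proof safe
    fix k assume "1 \<le> k" "f k \<le> t"
    with assms(2) have "f k < f n" by linarith
    with \<open>1 \<le> k\<close> show "k \<in> {1..n}" by (simp add: strict_mono_less[OF assms(1)])
  qed
  then show ?thesis using card_mono[of "{1..n}"] by simp
qed

lemma exists_threshold_index:
  fixes f :: "nat \<Rightarrow> real"
  assumes "f 0 \<le> t" "filterlim f at_top sequentially"
  shows "\<exists>k. f k \<le> t \<and> t < f (Suc k)"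
proof -
  from assms(2) obtain n where n: "t < f n"
    by (auto simp: filterlim_at_top_dense eventually_sequentially)
  define m where "m = (LEAST n. t < f n)"
  have m: "t < f m" unfolding m_def by (rule LeastI[of "\<lambda>n. t < f n", OF n])
  with assms(1) obtain k where k: "m = Suc k" by (cases m) auto
  have "\<not> t < f k" using not_less_Least[of k "\<lambda>n. t < f n"] k m_def by auto
  with m k show ?thesis by (auto simp: not_less)
qed

lemma arrival_0 [simp]: "arrival T 0 \<omega> = 0"
  by (simp add: arrival_def)

lemma arrival_Suc: "arrival T (Suc n) \<omega> = arrival T n \<omega> + T (Suc n) \<omega>"
  by (simp add: arrival_def)

lemma strict_mono_arrival:
  assumes "\<And>i. i \<ge> 1 \<Longrightarrow> T i \<omega> > 0"
  shows "strict_mono (\<lambda>n. arrival T n \<omega>)"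
  by (rule strict_mono_Suc_iff[THEN iffD2]) (use assms in \<open>simp add: arrival_Suc\<close>)

lemma count_proc_eq_iff:
  assumes "strict_mono (\<lambda>n. arrival T n \<omega>)"
    and "filterlim (\<lambda>n. arrival T n \<omega>) at_top sequentially" and "t \<ge> 0"
  shows "count_proc T t \<omega> = k \<longleftrightarrow> arrival T k \<omega> \<le> t \<and> t < arrival T (Suc k) \<omega>"
proof -
  obtain j where j: "arrival T j \<omega> \<le> t" "t < arrival T (Suc j) \<omega>"
    using exists_threshold_index[OF _ assms(2)] assms(3) by auto
  have "count_proc T t \<omega> = j"
    unfolding count_proc_def using card_le_threshold_eq[OF assms(1) j] .
  moreover have "count_proc T t \<omega> = k"
    if "arrival T k \<omega> \<le> t" "t < arrival T (Suc k) \<omega>"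
    unfolding count_proc_def using card_le_threshold_eq[OF assms(1) that] .
  ultimately show ?thesis using j by blast
qed

lemma count_proc_le:
  assumes "strict_mono (\<lambda>n. arrival T n \<omega>)" "t < arrival T n \<omega>"
  shows "count_proc T t \<omega> \<le> n"
  unfolding count_proc_def using card_le_threshold_le[OF assms] .

lemma borel_measurable_arrival [measurable]:
  assumes "\<And>i. i \<ge> 1 \<Longrightarrow> T i \<in> borel_measurable M"
  shows "(\<lambda>\<omega>. arrival T n \<omega>) \<in> borel_measurable M"
  unfolding arrival_def using assms by (intro borel_measurable_sum) auto

lemma measurable_count_proc:
  assumes "\<And>i. i \<ge> 1 \<Longrightarrow> T i \<in> borel_measurable M"
    and "\<And>\<omega>. \<omega> \<in> space M \<Longrightarrow> strict_mono (\<lambda>n. arrival T n \<omega>)"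
    and "\<And>\<omega>. \<omega> \<in> space M \<Longrightarrow> filterlim (\<lambda>n. arrival T n \<omega>) at_top sequentially"
    and "t \<ge> 0"
  shows "(\<lambda>\<omega>. count_proc T t \<omega>) \<in> measurable M (count_space UNIV)"
proof (subst measurable_count_space_eq2_countable, safe)
  fix k
  have "(\<lambda>\<omega>. count_proc T t \<omega>) -` {k} \<inter> space M
      = {\<omega> \<in> space M. arrival T k \<omega> \<le> t \<and> t < arrival T (Suc k) \<omega>}"
    using count_proc_eq_iff[OF assms(2,3,4), where k = k] by blast
  also have "\<dots> \<in> sets M" using assms(1) by measurable
  finally show "(\<lambda>\<omega>. count_proc T t \<omega>) -` {k} \<inter> space M \<in> sets M" .
qed simp

lemma LDP_closed_exponential_decay:
  assumes "LDP P I" "closed F" "0 < (INF x\<in>F. I x)"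
  shows "\<exists>d>0. \<forall>\<^sub>F t in at_top. measure (P t) F \<le> exp (- d * t)"
proof -
  obtain d where d: "0 < ereal d" "ereal d < (INF x\<in>F. I x)"
    using ereal_dense2[OF assms(3)] by blast
  have "Limsup at_top (\<lambda>t. ereal (1/t) * elog (measure (P t) F)) \<le> - (INF x\<in>F. I x)"
    using assms(1,2) unfolding LDP_def by blast
  also have "\<dots> < - ereal d" using d(2) by (simp add: ereal_uminus_less_reorder)
  finally have "\<forall>\<^sub>F t in at_top. ereal (1/t) * elog (measure (P t) F) < - ereal d"
    by (rule Limsup_lessD)
  then have "\<forall>\<^sub>F t in at_top. measure (P t) F \<le> exp (- d * t)"
    using eventually_gt_at_top[of 0]
  proof eventually_elim
    case (elim t)
    show ?case
    proof (cases "measure (P t) F > 0")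
      case True
      with elim have "ln (measure (P t) F) < - d * t" by (simp add: elog_def field_simps)
      then show ?thesis using True by (metis exp_less_cancel_iff exp_ln less_imp_le)
    qed (meson exp_ge_zero not_less order.trans)
  qed
  with d(1) show ?thesis by auto
qed

lemma (in finite_measure) measure_UN_tail_less:
  assumes "summable (\<lambda>n. measure M (B n))" "\<And>n. B n \<in> sets M" "e > 0"
  shows "\<exists>n0. measure M (\<Union>n. B (n + n0)) < e"
proof -
  obtain n0 where n0: "\<bar>\<Sum>n. measure M (B (n + n0))\<bar> < e"
    using suminf_exist_split[OF assms(3,1)] by auto
  have "summable (\<lambda>n. measure M (B (n + n0)))"
    using assms(1) by (subst summable_iff_shift)
  then have "measure M (\<Union>n. B (n + n0)) \<le> (\<Sum>n. measure M (B (n + n0)))"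
    using assms(2) by (intro finite_measure_subadditive_countably) auto
  with n0 show ?thesis by (intro exI[of _ n0]) linarith
qed

lemma (in finite_measure) tendsto_measure_UN_greater:
  assumes "finite S" "\<And>n. n \<in> S \<Longrightarrow> X n \<in> borel_measurable M"
  shows "(\<lambda>m::nat. measure M (\<Union>n\<in>S. {\<omega> \<in> space M. real m < X n \<omega>})) \<longlonglongrightarrow> 0"
proof -
  define U where "U m = (\<Union>n\<in>S. {\<omega> \<in> space M. real m < X n \<omega>})" for m :: nat
  have "(\<Inter>m. U m) = {}"
  proof -
    have "\<omega> \<notin> U (nat \<lceil>\<Sum>n\<in>S. \<bar>X n \<omega>\<bar>\<rceil>)" for \<omega>
    proof -
      have "X n \<omega> \<le> real (nat \<lceil>\<Sum>n\<in>S. \<bar>X n \<omega>\<bar>\<rceil>)" if "n \<in> S" for n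
        using member_le_sum[OF that, of "\<lambda>n. \<bar>X n \<omega>\<bar>"] assms(1) by linarith
      then show ?thesis unfolding U_def by (auto simp: not_less)
    qed
    then show ?thesis by blast
  qed
  moreover have "(\<lambda>m. measure M (U m)) \<longlonglongrightarrow> measure M (\<Inter>m. U m)"
    using assms by (intro finite_Lim_measure_decseq) (auto simp: U_def decseq_def)
  ultimately show ?thesis by (simp add: U_def)
qed

lemma INF_pos_below_unique_zero:
  fixes I :: "real \<Rightarrow> ereal"
  assumes "\<And>x. 0 \<le> I x" "\<And>x. I x = 0 \<longleftrightarrow> x = \<mu>" "antimono_on {0..\<mu>} I" "0 \<le> c" "c < \<mu>"
  shows "0 < (INF x\<in>{0..c}. I x)"
proof -
  have "0 < I c" using assms(1,2,5) by (metis less_eq_ereal_def less_irrefl)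
  also have "I c \<le> (INF x\<in>{0..c}. I x)"
    using assms(4,5) by (intro INF_greatest monotone_onD[OF assms(3)]) auto
  finally show ?thesis .
qed

lemma le_linear_plus_const:
  fixes g :: "nat \<Rightarrow> real"
  assumes "\<And>n. n < n0 \<Longrightarrow> g n \<le> M" "\<And>n. n \<ge> n0 \<Longrightarrow> g n \<le> real n * c" "c \<ge> 0" "M \<ge> 0"
  shows "g n \<le> real n * c + M"
  using assms(1,2)[of n] assms(3,4) by (cases "n < n0") (auto intro: add_increasing add_increasing2)

lemma (in prob_space) prob_all_le_linear_plus_const:
  fixes X :: "nat \<Rightarrow> 'a \<Rightarrow> real"
  assumes X_rv: "\<And>n. X n \<in> borel_measurable M" and c_nonneg: "c \<ge> 0" and "e > 0"
    and summable: "summable (\<lambda>n. prob {\<omega> \<in> space M. real n * c < X n \<omega>})"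
  shows "\<exists>K>0. prob (\<Inter>n. {\<omega> \<in> space M. X n \<omega> \<le> real n * c + K}) > 1 - e"
proof -
  define L where "L n0 = (\<Union>n. {\<omega> \<in> space M. real (n + n0) * c < X (n + n0) \<omega>})" for n0
  define U where "U n0 m = (\<Union>n\<in>{..<n0}. {\<omega> \<in> space M. real m < X n \<omega>})" for n0 m :: nat
  have L_sets: "L n0 \<in> events" and U_sets: "U n0 m \<in> events" for n0 m
    using X_rv unfolding L_def U_def by measurable
  from measure_UN_tail_less[OF summable _ half_gt_zero[OF \<open>e > 0\<close>]]
  obtain n0 where late: "prob (L n0) < e / 2"
    using X_rv unfolding L_def by auto
  have "(\<lambda>m. prob (U n0 m)) \<longlonglongrightarrow> 0"
    using X_rv unfolding U_def by (intro tendsto_measure_UN_greater) auto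
  from order_tendstoD(2)[OF this half_gt_zero[OF \<open>e > 0\<close>]]
  obtain m :: nat where "m \<ge> 1" and early: "prob (U n0 m) < e / 2"
    by (metis (no_types, lifting) eventually_sequentially max.cobounded1 max.cobounded2)
  define S where "S = (\<Inter>n. {\<omega> \<in> space M. X n \<omega> \<le> real n * c + real m})"
  have "space M - (U n0 m \<union> L n0) \<subseteq> S"
  proof (unfold S_def, safe)
    fix \<omega> n assume \<omega>: "\<omega> \<in> space M" "\<omega> \<notin> U n0 m" "\<omega> \<notin> L n0"
    show "X n \<omega> \<le> real n * c + real m"
    proof (rule le_linear_plus_const[OF _ _ c_nonneg])
      show "X j \<omega> \<le> real m" if "j < n0" for j
        using \<omega>(1,2) that unfolding U_def by (auto simp: not_less)
      show "X j \<omega> \<le> real j * c" if "n0 \<le> j" for j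
      proof -
        have "\<omega> \<notin> {\<omega> \<in> space M. real (j - n0 + n0) * c < X (j - n0 + n0) \<omega>}"
          using \<omega>(3) unfolding L_def by blast
        with \<omega>(1) that show ?thesis by auto
      qed
    qed simp
  qed
  then have "prob (space M - (U n0 m \<union> L n0)) \<le> prob S"
    using X_rv unfolding S_def by (intro finite_measure_mono) measurable
  moreover have "prob (U n0 m \<union> L n0) \<le> prob (U n0 m) + prob (L n0)"
    using U_sets L_sets by (rule measure_Un_le)
  ultimately have "prob S > 1 - e"
    using early late prob_compl[of "U n0 m \<union> L n0"] U_sets L_sets by auto
  with \<open>m \<ge> 1\<close> show ?thesis unfolding S_def by (intro exI[of _ "real m"]) auto
qed

lemma (in prob_space) summable_measure_arrival_gt_linear:
  assumes T_rv: "\<And>i. i \<ge> 1 \<Longrightarrow> T i \<in> borel_measurable M"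
    and T_pos: "\<And>i \<omega>. i \<ge> 1 \<Longrightarrow> \<omega> \<in> space M \<Longrightarrow> T i \<omega> > 0"
    and loc_finite: "\<And>\<omega>. \<omega> \<in> space M \<Longrightarrow> filterlim (\<lambda>n. arrival T n \<omega>) at_top sequentially"
    and LDP: "LDP (\<lambda>t. distr M borel (\<lambda>\<omega>. real (count_proc T t \<omega>) / t)) I"
    and a_pos: "a > 0" and I_pos: "0 < (INF x\<in>{0..1/a}. I x)"
  shows "summable (\<lambda>n. measure M {\<omega> \<in> space M. real n * a < arrival T n \<omega>})"
proof -
  define X where "X t \<omega> = real (count_proc T t \<omega>) / t" for t \<omega>
  have mono: "strict_mono (\<lambda>n. arrival T n \<omega>)" if "\<omega> \<in> space M" for \<omega>
    using T_pos that by (intro strict_mono_arrival) auto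
  have X_meas: "X t \<in> borel_measurable M" if "t \<ge> 0" for t
    using measurable_comp[OF measurable_count_proc[OF T_rv mono loc_finite that],
        of "\<lambda>k. real k / t" borel]
    by (simp add: X_def[abs_def] comp_def)
  have "LDP (\<lambda>t. distr M borel (X t)) I"
    using LDP unfolding X_def[abs_def] .
  from LDP_closed_exponential_decay[OF this _ I_pos] obtain d where d: "d > 0"
    and decay: "\<forall>\<^sub>F t in at_top. measure (distr M borel (X t)) {0..1/a} \<le> exp (- d * t)"
    by auto
  have "filterlim (\<lambda>n. real n * a) at_top sequentially"
    using filterlim_at_top_mult_tendsto_pos[OF tendsto_const a_pos filterlim_real_sequentially] .
  with decay have tail: "\<forall>\<^sub>F n in sequentially. measure (distr M borel (X (real n * a))) {0..1/a}
      \<le> exp (- d * (real n * a))"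
    by (rule eventually_compose_filterlim)
  have "\<forall>\<^sub>F n in sequentially.
      norm (measure M {\<omega> \<in> space M. real n * a < arrival T n \<omega>}) \<le> exp (- d * a) ^ n"
    using tail eventually_ge_at_top[of 1]
  proof eventually_elim
    case (elim n)
    define t where "t = real n * a"
    have "{\<omega> \<in> space M. t < arrival T n \<omega>} \<subseteq> X t -` {0..1/a} \<inter> space M"
    proof
      fix \<omega> assume "\<omega> \<in> {\<omega> \<in> space M. t < arrival T n \<omega>}"
      then have \<omega>: "\<omega> \<in> space M" "t < arrival T n \<omega>" by auto
      have "real (count_proc T t \<omega>) / t \<le> real n / t"
        using count_proc_le[OF mono \<omega>(2)] \<omega>(1) a_pos unfolding t_def
        by (intro divide_right_mono) auto
      also have "\<dots> = 1 / a" using elim(2) a_pos unfolding t_def by simp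
      finally show "\<omega> \<in> X t -` {0..1/a} \<inter> space M"
        using a_pos \<omega>(1) unfolding X_def t_def by simp
    qed
    then have "measure M {\<omega> \<in> space M. t < arrival T n \<omega>} \<le> measure M (X t -` {0..1/a} \<inter> space M)"
      using X_meas[of t] a_pos unfolding t_def by (intro finite_measure_mono measurable_sets) auto
    also have "\<dots> = measure (distr M borel (X t)) {0..1/a}"
      using X_meas[of t] a_pos unfolding t_def by (intro measure_distr[symmetric]) auto
    also have "\<dots> \<le> exp (real n * (- d * a))"
      using elim(1) unfolding t_def by (simp add: algebra_simps)
    also have "\<dots> = exp (- d * a) ^ n" by (rule exp_of_nat_mult)
    finally show ?case unfolding t_def by simp
  qed
  moreover have "summable (\<lambda>n. exp (- d * a) ^ n)"
    using d a_pos by (intro summable_geometric) simp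
  ultimately show ?thesis by (rule summable_comparison_test_ev)
qed

theorem lemma1:
  fixes Pr :: "'a measure"
    and T :: "nat \<Rightarrow> 'a \<Rightarrow> real"
    and C :: "nat \<Rightarrow> 'a \<Rightarrow> real"
    and I :: "real \<Rightarrow> ereal"
    and p \<mu> \<epsilon> \<epsilon>' :: real
  assumes "prob_space Pr"
    \<comment> \<open>simple point process on [0,\<infinity>) with inter-arrival times T_1, T_2, ...\<close>
    and T_rv: "\<And>i. i \<ge> 1 \<Longrightarrow> T i \<in> borel_measurable Pr"
    and T_pos: "\<And>i \<omega>. i \<ge> 1 \<Longrightarrow> \<omega> \<in> space Pr \<Longrightarrow> T i \<omega> > 0"
    and loc_finite: "\<And>\<omega>. \<omega> \<in> space Pr \<Longrightarrow> filterlim (\<lambda>n. arrival T n \<omega>) at_top sequentially"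
    \<comment> \<open>premium rate and i.i.d. nonnegative claims with finite mean, independent of N\<close>
    and p_pos: "p > 0"
    and C_indep: "prob_space.indep_vars Pr (\<lambda>_. borel) C {1..}"
    and C_ident: "\<And>i. i \<ge> 1 \<Longrightarrow> distr Pr borel (C i) = distr Pr borel (C 1)"
    and C_rv: "\<And>i. i \<ge> 1 \<Longrightarrow> C i \<in> borel_measurable Pr"
    and C_nonneg: "\<And>i \<omega>. i \<ge> 1 \<Longrightarrow> \<omega> \<in> space Pr \<Longrightarrow> C i \<omega> \<ge> 0"
    and C_int: "integrable Pr (C 1)"
    and C_N_indep: "prob_space.indep_set Pr
        (sets (vimage_algebra (space Pr) (\<lambda>\<omega> (i::nat). if i \<ge> 1 then C i \<omega> else 0)
                 (Pi\<^sub>M UNIV (\<lambda>_. borel))))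
        (sets (vimage_algebra (space Pr) (\<lambda>\<omega> (t::real). real (count_proc T t \<omega>))
                 (Pi\<^sub>M UNIV (\<lambda>_. borel))))"
    \<comment> \<open>Assumption A1\<close>
    and A1_i_LDP: "LDP (\<lambda>t. distr Pr borel (\<lambda>\<omega>. real (count_proc T t \<omega>) / t)) I"
    and A1_i_zero: "\<And>x. I x = 0 \<longleftrightarrow> x = \<mu>"
    and mu_pos: "\<mu> > 0"
    and A1_ii_inc: "mono_on {\<mu>..} I"
    and A1_ii_dec: "antimono_on {0..\<mu>} I"
    and A1_iii: "\<mu> * prob_space.expectation Pr (C 1) / p < 1"
    and A1_iv: "\<exists>\<theta>>0. \<forall>n. integrable Pr (\<lambda>\<omega>. exp (\<theta> * arrival T n \<omega>))"
    and eps_pos: "\<epsilon> > 0" and eps'_pos: "\<epsilon>' > 0"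
  shows "\<exists>M>0. measure Pr (\<Inter>n\<in>{1..}.
            {\<omega> \<in> space Pr. p * arrival T n \<omega> \<le> real n * (p / \<mu> + \<epsilon>) + M}) > 1 - \<epsilon>'"
proof -
  interpret prob_space Pr by fact
  define a where "a = 1/\<mu> + \<epsilon>/p"
  have a_pos: "a > 0" and "1/\<mu> < a" and p_a: "p * a = p / \<mu> + \<epsilon>"
    using mu_pos eps_pos p_pos by (simp_all add: a_def add_pos_pos field_simps)
  then have "1/a < \<mu>" using mu_pos by (simp add: field_simps)
  have I_pos: "0 < (INF x\<in>{0..1/a}. I x)"
    using A1_i_LDP A1_i_zero A1_ii_dec a_pos \<open>1/a < \<mu>\<close>
    by (intro INF_pos_below_unique_zero) (auto simp: LDP_def rate_function_def)
  have "{\<omega> \<in> space Pr. real n * (p / \<mu> + \<epsilon>) < p * arrival T n \<omega>}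
      = {\<omega> \<in> space Pr. real n * a < arrival T n \<omega>}" for n
    using p_pos by (auto simp flip: p_a simp: mult.left_commute[of "real n"])
  then have "summable (\<lambda>n. prob {\<omega> \<in> space Pr. real n * (p / \<mu> + \<epsilon>) < p * arrival T n \<omega>})"
    using summable_measure_arrival_gt_linear[OF T_rv T_pos loc_finite A1_i_LDP a_pos I_pos]
    by simp
  moreover have "(\<lambda>\<omega>. p * arrival T n \<omega>) \<in> borel_measurable Pr" for n
    using T_rv by measurable
  moreover have "0 \<le> p / \<mu> + \<epsilon>"
    using p_pos mu_pos eps_pos by simp
  ultimately obtain M where "M > 0"
    and M: "prob (\<Inter>n. {\<omega> \<in> space Pr. p * arrival T n \<omega> \<le> real n * (p / \<mu> + \<epsilon>) + M})
      > 1 - \<epsilon>'"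
    using prob_all_le_linear_plus_const[of "\<lambda>n \<omega>. p * arrival T n \<omega>", OF _ _ eps'_pos]
    by blast
  have "(\<Inter>n\<in>{1..}. {\<omega> \<in> space Pr. p * arrival T n \<omega> \<le> real n * (p / \<mu> + \<epsilon>) + M})
      = (\<Inter>n. {\<omega> \<in> space Pr. p * arrival T n \<omega> \<le> real n * (p / \<mu> + \<epsilon>) + M})"
    using \<open>M > 0\<close> by (auto simp: atLeast_def)
      (metis Suc_leI arrival_0 mult_zero_left mult_zero_right add_0 less_imp_le neq0_conv of_nat_0)
  with \<open>M > 0\<close> M show ?thesis by (intro exI[of _ M]) auto
qed

end
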